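(* Let $\mathcal{B}$ be a building set on $[d]$. The nestohedron $\Delta_{\mathcal{B}}$ is inscribed if and only if for all $J\subseteq[d]$ the following holds: whenever $i,j,k\in J$ satisfy $n^k_{i,j}(\mathcal{B}|_J)>0$ and $n^i_{j,k}(\mathcal{B}|_J)>0$, then $n^k_{i,j}(\mathcal{B}|_J)=n^i_{j,k}(\mathcal{B}|_J)=n^j_{i,k}(\mathcal{B}|_J)$.
   Context: A building set is a collection $\mathcal{B}$ of subsets of $[d]=\{1,\dots,d\}$ such that $I\cap J\neq\emptyset$ implies $I\cup J\in\mathcal{B}$ for all $I,J\in\mathcal{B}$. For $I\subseteq[d]$, $\Delta_I=\mathrm{conv}(e_i:i\in I)$, and the nestohedron is the Minkowski sum $\Delta_{\mathcal{B}}=\sum_{I\in\mathcal{B}}\Delta_I$. For $i,j,k\in[d]$, $n^k_{i,j}(\mathcal{B})$ is the number of $I\in\mathcal{B}$ with $i,j\in I$ and $k\notin I$. The restriction is $\mathcal{B}|_J=\{I\in\mathcal{B}:I\subseteq J\}$. A polytope is inscribed if all its vertices lie on a common sphere. *)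

theory Defs
  imports "HOL-Analysis.Analysis"
begin

text \<open>The ground set [d] is the finite type 'n; R^d is real^'n.
  A building set: a collection of nonempty subsets closed under unions of intersecting members.\<close>

definition building_set :: "'n set set \<Rightarrow> bool" where
  "building_set B \<longleftrightarrow> {} \<notin> B \<and>
     (\<forall>I\<in>B. \<forall>J\<in>B. I \<inter> J \<noteq> {} \<longrightarrow> I \<union> J \<in> B)"

definition simplex_face :: "('n::finite) set \<Rightarrow> (real^'n) set" where
  "simplex_face I = convex hull ((\<lambda>i. axis i 1) ` I)"

definition nestohedron :: "('n::finite) set set \<Rightarrow> (real^'n) set" where
  "nestohedron B = {(\<Sum>I\<in>B. p I) | p. \<forall>I\<in>B. p I \<in> simplex_face I}"

definition inscribed :: "('a::real_normed_vector) set \<Rightarrow> bool" where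
  "inscribed P \<longleftrightarrow> (\<exists>c r. {v. v extreme_point_of P} \<subseteq> sphere c r)"

definition ncount :: "'n set set \<Rightarrow> 'n \<Rightarrow> 'n \<Rightarrow> 'n \<Rightarrow> nat" where
  "ncount B k i j = card {I\<in>B. i \<in> I \<and> j \<in> I \<and> k \<notin> I}"

definition restrict_bset :: "'n set set \<Rightarrow> 'n set \<Rightarrow> 'n set set" where
  "restrict_bset B J = {I\<in>B. I \<subseteq> J}"

end

theory Submission
  imports Defs
begin

text \<open>
  Encode a linear order on the ground set by an injective weight function w. Picking in
  every member I of B its w-largest element and adding up the corresponding unit vectors
  gives a vertex v_w of the nestohedron. Every vertex arises in this way: let w order the
  coordinates of a linear functional that exposes it.

  Swapping two w-consecutive elements a < b moves v_w by N (e_a - e_b), where N counts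
  the members of B that contain a and b and lie in the down-set P of b. Hence the squared
  distance from v_w to a point c changes by 2 N (D_P(a, b) - c_a + c_b), where the
  imbalance D_P(a, b) is the number of members of B inside P containing a but not b,
  minus the number containing b but not a.

  If all vertices lie on a sphere with centre c, then D_P(a, b) = c_a - c_b whenever some
  member of B inside P contains a and b; comparing P = J with P = J - {k} gives the
  counting condition. Conversely, under the counting condition D_P(a, b) does not depend
  on P, so it equals deg a - deg b, and the degree vector is at the same distance from
  v_w and from its swap. Consecutive swaps connect any two linear orders, so the degree
  vector is the centre of a sphere through all vertices.
\<close>

section \<open>Linear orders as injective weight functions\<close>

lemma arg_max_on_inj_eq_iff:
  fixes w :: "'a \<Rightarrow> 'b::linorder"
  assumes "inj w" "finite I" "I \<noteq> {}"
  shows "arg_max_on w I = x \<longleftrightarrow> x \<in> I \<and> (\<forall>y\<in>I. w y \<le> w x)"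
proof -
  have "Max (w ` I) \<in> w ` I"
    using assms(2,3) by simp
  then obtain m where m: "m \<in> I" "w m = Max (w ` I)"
    by (metis imageE)
  have m_max: "\<forall>y\<in>I. w y \<le> w m"
    using m assms(2) by simp
  have unique: "x = m" if "x \<in> I" "\<forall>y\<in>I. w y \<le> w x" for x
    using that m m_max assms(1) by (metis antisym inj_eq)
  have "arg_max_on w I = m"
    unfolding arg_max_on_def
    by (rule arg_maxI[of "\<lambda>x. x \<in> I"]) (use m(1) m_max unique in \<open>auto simp: not_less\<close>)
  then show ?thesis
    using unique m(1) m_max by blast
qed

lemma arg_max_on_inj:
  fixes w :: "'a \<Rightarrow> 'b::linorder"
  assumes "inj w" "finite I" "I \<noteq> {}"
  shows "arg_max_on w I \<in> I" "y \<in> I \<Longrightarrow> w y \<le> w (arg_max_on w I)"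
  using arg_max_on_inj_eq_iff[OF assms, of "arg_max_on w I"] by auto

definition consecutive :: "('n \<Rightarrow> 'a::linorder) \<Rightarrow> 'n \<Rightarrow> 'n \<Rightarrow> bool" where
  "consecutive w a b \<longleftrightarrow> w a < w b \<and> (\<forall>c. \<not> (w a < w c \<and> w c < w b))"

lemma inj_swap_values:
  assumes "inj w" shows "inj (w(a := w b, b := w a))"
  using assms unfolding inj_def by (auto split: if_splits)

lemma swap_consecutive_less_iff:
  fixes w :: "'n \<Rightarrow> 'a::linorder"
  assumes "inj w" "consecutive w a b" "\<not> (x = a \<and> y = b)" "\<not> (x = b \<and> y = a)"
  shows "(w(a := w b, b := w a)) x < (w(a := w b, b := w a)) y \<longleftrightarrow> w x < w y"
  using assms unfolding consecutive_def inj_def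
  by (cases "x = a"; cases "x = b"; cases "y = a"; cases "y = b") (auto, (metis linorder_neqE)+)

lemma arg_max_on_swap_consecutive:
  fixes w :: "'n \<Rightarrow> 'a::linorder"
  assumes "inj w" "consecutive w a b" "finite I" "I \<noteq> {}"
  shows "arg_max_on (w(a := w b, b := w a)) I =
    (if a \<in> I \<and> arg_max_on w I = b then a else arg_max_on w I)"
proof -
  let ?w' = "w(a := w b, b := w a)"
  let ?t = "arg_max_on w I"
  have t: "?t \<in> I" "\<And>y. y \<in> I \<Longrightarrow> w y \<le> w ?t"
    using arg_max_on_inj[OF assms(1,3,4)] by auto
  have ab: "w a < w b" "a \<noteq> b"
    using assms(2) unfolding consecutive_def by auto
  have below_t: "w y < w ?t" if "y \<in> I" "y \<noteq> ?t" for y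
    using t(2)[OF that(1)] that(2) inj_eq[OF assms(1)] by (simp add: order.strict_iff_order)
  show ?thesis
  proof (cases "a \<in> I \<and> ?t = b")
    case True
    have "?w' y \<le> ?w' a" if "y \<in> I" for y
      using True t(2)[OF that] ab by (cases "y = a"; cases "y = b") auto
    then show ?thesis
      using True arg_max_on_inj_eq_iff[OF inj_swap_values[OF assms(1)] assms(3,4)] by auto
  next
    case False
    have "?w' y < ?w' ?t" if "y \<in> I" "y \<noteq> ?t" for y
    proof -
      have "\<not> (y = b \<and> ?t = a)"
        using t(2)[of b] ab that(1) by auto
      moreover have "\<not> (y = a \<and> ?t = b)"
        using False that(1) by auto
      ultimately show ?thesis
        using below_t[OF that] swap_consecutive_less_iff[OF assms(1,2), of y ?t] by simp
    qed
    then have "\<forall>y\<in>I. ?w' y \<le> ?w' ?t"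
      using order.strict_implies_order by blast
    then show ?thesis
      using False t(1) arg_max_on_inj_eq_iff[OF inj_swap_values[OF assms(1)] assms(3,4)] by auto
  qed
qed

lemma arg_max_on_consecutive_iff:
  fixes w :: "'n \<Rightarrow> 'a::linorder"
  assumes "inj w" "consecutive w a b" "finite I" "I \<noteq> {}"
  shows "arg_max_on w I = b \<longleftrightarrow> b \<in> I \<and> I \<subseteq> {x. w x \<le> w b}"
    and "arg_max_on w I = a \<longleftrightarrow> a \<in> I \<and> b \<notin> I \<and> I \<subseteq> {x. w x \<le> w b}"
proof -
  have ab: "w a < w b"
    using assms(2) unfolding consecutive_def by simp
  have below_a: "w y \<le> w a \<longleftrightarrow> w y \<le> w b \<and> y \<noteq> b" for y
  proof
    assume "w y \<le> w a"
    then show "w y \<le> w b \<and> y \<noteq> b"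
      using ab by auto
  next
    assume "w y \<le> w b \<and> y \<noteq> b"
    then have "w y < w b"
      using inj_eq[OF assms(1)] by (auto simp: order.strict_iff_order)
    then show "w y \<le> w a"
      using assms(2) unfolding consecutive_def by (meson not_less)
  qed
  show "arg_max_on w I = b \<longleftrightarrow> b \<in> I \<and> I \<subseteq> {x. w x \<le> w b}"
    unfolding arg_max_on_inj_eq_iff[OF assms(1,3,4)] by auto
  show "arg_max_on w I = a \<longleftrightarrow> a \<in> I \<and> b \<notin> I \<and> I \<subseteq> {x. w x \<le> w b}"
    unfolding arg_max_on_inj_eq_iff[OF assms(1,3,4)] below_a by auto
qed

definition inversions :: "('n \<Rightarrow> 'a::linorder) \<Rightarrow> ('n \<Rightarrow> 'b::linorder) \<Rightarrow> ('n \<times> 'n) set" where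
  "inversions w w0 = {(x, y). w x < w y \<and> w0 y < w0 x}"

lemma consecutive_inversion_exists:
  fixes w :: "'n::finite \<Rightarrow> 'a::linorder" and w0 :: "'n \<Rightarrow> 'b::linorder"
  assumes "inj w0" "(x, y) \<in> inversions w w0"
  shows "\<exists>a b. consecutive w a b \<and> (a, b) \<in> inversions w w0"
  using assms(2)
proof (induction "card {c. w x < w c \<and> w c < w y}" arbitrary: x y rule: less_induct)
  case less
  show ?case
  proof (cases "consecutive w x y")
    case True
    then show ?thesis using less.prems by blast
  next
    case False
    then obtain c where c: "w x < w c" "w c < w y"
      using less.prems unfolding consecutive_def inversions_def by auto
    have smaller: "card {d. w x < w d \<and> w d < w c} < card {d. w x < w d \<and> w d < w y}"
      "card {d. w c < w d \<and> w d < w y} < card {d. w x < w d \<and> w d < w y}"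
      using c by (auto intro!: psubset_card_mono)
    have "c \<noteq> x" using c by auto
    then have "w0 c < w0 x \<or> w0 x < w0 c"
      using assms(1) by (metis inj_eq linorder_neqE)
    then have "(x, c) \<in> inversions w w0 \<or> (c, y) \<in> inversions w w0"
      using c less.prems unfolding inversions_def by auto
    then show ?thesis
      using less.hyps smaller by blast
  qed
qed

lemma inversions_swap_consecutive:
  fixes w :: "'n \<Rightarrow> 'a::linorder" and w0 :: "'n \<Rightarrow> 'b::linorder"
  assumes "inj w" "consecutive w a b" "(a, b) \<in> inversions w w0"
  shows "inversions (w(a := w b, b := w a)) w0 = inversions w w0 - {(a, b)}"
proof (rule set_eqI, clarify)
  fix x y
  show "(x, y) \<in> inversions (w(a := w b, b := w a)) w0 \<longleftrightarrow> (x, y) \<in> inversions w w0 - {(a, b)}"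
  proof (cases "(x = a \<and> y = b) \<or> (x = b \<and> y = a)")
    case True
    then show ?thesis
      using assms(2,3) unfolding inversions_def consecutive_def by auto
  next
    case False
    then show ?thesis
      using swap_consecutive_less_iff[OF assms(1,2), of x y] unfolding inversions_def by auto
  qed
qed

lemma const_if_consecutive_swap_invariant:
  fixes G :: "('n::finite \<Rightarrow> 'a::linorder) \<Rightarrow> 'c" and w0 :: "'n \<Rightarrow> 'b::linorder"
  assumes "inj w0" "inj w"
    and swap: "\<And>w a b. inj w \<Longrightarrow> consecutive w a b \<Longrightarrow> G (w(a := w b, b := w a)) = G w"
    and same_order: "\<And>w. inj w \<Longrightarrow> (\<forall>x y. w x < w y \<longrightarrow> w0 x < w0 y) \<Longrightarrow> G w = g"
  shows "G w = g"
  using assms(2)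
proof (induction "card (inversions w w0)" arbitrary: w rule: less_induct)
  case less
  show ?case
  proof (cases "inversions w w0 = {}")
    case True
    have "w0 x < w0 y" if "w x < w y" for x y
    proof -
      have "\<not> w0 y < w0 x"
        using True that unfolding inversions_def by blast
      moreover have "w0 x \<noteq> w0 y"
        using that assms(1) by (metis inj_eq less_irrefl)
      ultimately show ?thesis by simp
    qed
    then show ?thesis
      using same_order less.prems by blast
  next
    case False
    then obtain a b where ab: "consecutive w a b" "(a, b) \<in> inversions w w0"
      using consecutive_inversion_exists[OF assms(1)] by fast
    let ?w' = "w(a := w b, b := w a)"
    have "card (inversions ?w' w0) < card (inversions w w0)"
      unfolding inversions_swap_consecutive[OF less.prems ab]
      by (rule card_Diff1_less[OF finite ab(2)])
    then have "G ?w' = g"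
      using less.hyps inj_swap_values[OF less.prems] by blast
    then show ?thesis
      using swap[OF less.prems ab(1)] by simp
  qed
qed

lemma exists_inj_nat_mono:
  fixes f :: "'n::finite \<Rightarrow> 'b::linorder"
  shows "\<exists>w :: 'n \<Rightarrow> nat. inj w \<and> (\<forall>i j. w i \<le> w j \<longrightarrow> f i \<le> f j)"
proof -
  obtain r :: "'n \<Rightarrow> nat" and n where r: "r ` UNIV = {..<n}" "inj r"
    using finite_imp_inj_to_nat_seg[of "UNIV :: 'n set"] by auto
  define rank where "rank x = card {y. f y < f x}" for x
  \<comment> \<open>lexicographic: first by the rank under f, ties broken by r < n\<close>
  define w where "w x = n * rank x + r x" for x
  have rank_less: "rank j < rank i" if "f j < f i" for i j
    unfolding rank_def using that by (intro psubset_card_mono) (auto intro: less_trans)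
  have mono: "f i \<le> f j" if "w i \<le> w j" for i j
  proof (rule ccontr)
    assume "\<not> f i \<le> f j"
    then have "Suc (rank j) \<le> rank i"
      using rank_less by (simp add: Suc_leI)
    then have "n * Suc (rank j) \<le> n * rank i"
      by (rule mult_le_mono2)
    moreover have "r j < n"
      using r(1) by auto
    ultimately have "w j < w i"
      unfolding w_def by simp
    then show False
      using that by simp
  qed
  have "inj w"
  proof (rule injI)
    fix i j assume "w i = w j"
    then have "f i = f j"
      using mono by (metis order.antisym order.refl)
    then have "rank i = rank j"
      unfolding rank_def by simp
    then have "r i = r j"
      using \<open>w i = w j\<close> unfolding w_def by simp
    then show "i = j"
      using r(2) by (simp add: inj_eq)
  qed
  then show ?thesis
    using mono by blast
qed

lemma exists_consecutive_with_downset: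
  fixes P :: "'n::finite set"
  assumes "a \<noteq> b" "a \<in> P" "b \<in> P"
  shows "\<exists>w :: 'n \<Rightarrow> nat. inj w \<and> consecutive w a b \<and> {x. w x \<le> w b} = P"
proof -
  obtain r :: "'n \<Rightarrow> nat" and n where r: "r ` UNIV = {..<n}" "inj r"
    using finite_imp_inj_to_nat_seg[of "UNIV :: 'n set"] by auto
  have r_less: "r x < n" for x
    using r(1) by auto
  define w where
    "w x = (if x = a then n else if x = b then Suc n else if x \<in> P then r x else 2 * n + 2 + r x)" for x
  have "inj w"
  proof (rule injI)
    fix x y assume "w x = w y"
    then show "x = y"
      using r_less[of x] r_less[of y] r(2) assms(1) unfolding w_def
      by (auto simp: inj_eq split: if_splits)
  qed
  moreover have "consecutive w a b"
    using assms(1) unfolding w_def consecutive_def by auto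
  moreover have "{x. w x \<le> w b} = P"
  proof (rule set_eqI)
    fix x
    show "x \<in> {x. w x \<le> w b} \<longleftrightarrow> x \<in> P"
      using assms r_less[of x] unfolding w_def by auto
  qed
  ultimately show ?thesis
    by blast
qed

section \<open>Vertices of the nestohedron\<close>

definition nest_vertex :: "'n set set \<Rightarrow> ('n::finite \<Rightarrow> 'a::linorder) \<Rightarrow> real^'n" where
  "nest_vertex B w = (\<Sum>I\<in>B. axis (arg_max_on w I) 1)"

lemma set_sum_memE:
  assumes "finite A" "y \<in> (\<Sum>i\<in>A. S i)"
  obtains s where "y = (\<Sum>i\<in>A. s i)" "\<forall>i\<in>A. s i \<in> S i"
proof -
  have "y \<in> {\<Sum>i\<in>A. s i | s. \<forall>i\<in>A. s i \<in> S i}"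
    using assms by (simp only: set_sum_alt)
  then show ?thesis
    using that by blast
qed

lemma nestohedron_eq_convex_hull:
  "nestohedron B = convex hull (\<Sum>I\<in>B. (\<lambda>i. axis i 1) ` I)"
  unfolding convex_hull_set_sum nestohedron_def simplex_face_def
  by (simp add: set_sum_alt)

lemma polytope_nestohedron: "polytope (nestohedron B)"
  unfolding nestohedron_eq_convex_hull
  by (intro polytope_convex_hull finite_set_sum) auto

lemma nest_vertex_in_set_sum:
  assumes "inj w" "{} \<notin> B"
  shows "nest_vertex B w \<in> (\<Sum>I\<in>B. (\<lambda>i. axis i 1) ` I)"
proof -
  have "axis (arg_max_on w I) 1 \<in> (\<lambda>i. axis i 1) ` I" if "I \<in> B" for I
  proof -
    have "I \<noteq> {}"
      using assms(2) that by blast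
    then show ?thesis
      using arg_max_on_inj(1)[OF assms(1) finite] by blast
  qed
  then show ?thesis
    unfolding nest_vertex_def set_sum_alt[OF finite] by blast
qed

lemma inner_axis_le_arg_max_on:
  fixes a :: "real^'n" and w :: "'n \<Rightarrow> 'b::linorder"
  assumes "inj w" "finite I" "i \<in> I" "\<forall>x y. w x \<le> w y \<longrightarrow> a $ x \<le> a $ y"
  shows "a \<bullet> axis i 1 \<le> a \<bullet> axis (arg_max_on w I) 1"
proof -
  have "I \<noteq> {}"
    using assms(3) by blast
  then have "w i \<le> w (arg_max_on w I)"
    using arg_max_on_inj(2)[OF assms(1,2)] assms(3) by blast
  then show ?thesis
    using assms(4) by (simp add: inner_axis)
qed

lemma inner_axis_less_arg_max_on:
  fixes a :: "real^'n" and w :: "'n \<Rightarrow> 'b::linorder"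
  assumes "inj w" "finite I" "i \<in> I" "i \<noteq> arg_max_on w I" "\<forall>x y. w x < w y \<longrightarrow> a $ x < a $ y"
  shows "a \<bullet> axis i 1 < a \<bullet> axis (arg_max_on w I) 1"
proof -
  have "I \<noteq> {}"
    using assms(3) by blast
  then have "w i \<le> w (arg_max_on w I)"
    using arg_max_on_inj(2)[OF assms(1,2)] assms(3) by blast
  then have "w i < w (arg_max_on w I)"
    using assms(4) inj_eq[OF assms(1)] by (simp add: order.strict_iff_order)
  then show ?thesis
    using assms(5) by (simp add: inner_axis)
qed

lemma inner_set_sum_le_nest_vertex:
  fixes a :: "real^'n::finite" and w :: "'n \<Rightarrow> 'b::linorder"
  assumes "inj w" "{} \<notin> B" "\<forall>i j. w i \<le> w j \<longrightarrow> a $ i \<le> a $ j"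
    and "y \<in> (\<Sum>I\<in>B. (\<lambda>i. axis i 1) ` I)"
  shows "a \<bullet> y \<le> a \<bullet> nest_vertex B w"
proof -
  obtain s where y: "y = (\<Sum>I\<in>B. s I)" and s: "\<forall>I\<in>B. s I \<in> (\<lambda>i. axis i 1) ` I"
    using set_sum_memE[OF finite assms(4)] by blast
  have "a \<bullet> s I \<le> a \<bullet> axis (arg_max_on w I) 1" if I: "I \<in> B" for I
  proof -
    obtain i where "i \<in> I" "s I = axis i 1"
      using s I by (meson imageE)
    then show ?thesis
      using inner_axis_le_arg_max_on[OF assms(1) finite \<open>i \<in> I\<close> assms(3)] by simp
  qed
  then show ?thesis
    unfolding y nest_vertex_def inner_sum_right by (rule sum_mono)
qed

lemma inner_set_sum_less_nest_vertex:
  fixes a :: "real^'n::finite" and w :: "'n \<Rightarrow> 'b::linorder"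
  assumes "inj w" "{} \<notin> B" "\<forall>i j. w i < w j \<longrightarrow> a $ i < a $ j"
    and "y \<in> (\<Sum>I\<in>B. (\<lambda>i. axis i 1) ` I)" "y \<noteq> nest_vertex B w"
  shows "a \<bullet> y < a \<bullet> nest_vertex B w"
proof -
  have mono: "\<forall>i j. w i \<le> w j \<longrightarrow> a $ i \<le> a $ j"
  proof (intro allI impI)
    fix i j assume "w i \<le> w j"
    then have "w i < w j \<or> i = j"
      using inj_eq[OF assms(1)] by (auto simp: order.order_iff_strict)
    then show "a $ i \<le> a $ j"
      using assms(3) by (auto intro: less_imp_le)
  qed
  obtain s where y: "y = (\<Sum>I\<in>B. s I)" and s: "\<forall>I\<in>B. s I \<in> (\<lambda>i. axis i 1) ` I"
    using set_sum_memE[OF finite assms(4)] by blast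
  have "\<exists>I\<in>B. s I \<noteq> axis (arg_max_on w I) 1"
  proof (rule ccontr)
    assume "\<not> (\<exists>I\<in>B. s I \<noteq> axis (arg_max_on w I) 1)"
    then have "y = nest_vertex B w"
      unfolding y nest_vertex_def by (intro sum.cong) auto
    then show False
      using assms(5) by blast
  qed
  then obtain I where I: "I \<in> B" "s I \<noteq> axis (arg_max_on w I) 1"
    by blast
  moreover obtain i where "i \<in> I" "s I = axis i 1"
    using s I(1) by (meson imageE)
  ultimately have "a \<bullet> s I < a \<bullet> axis (arg_max_on w I) 1"
    using inner_axis_less_arg_max_on[OF assms(1) finite \<open>i \<in> I\<close> _ assms(3)] by auto
  moreover have "a \<bullet> s J \<le> a \<bullet> axis (arg_max_on w J) 1" if J: "J \<in> B" for J
  proof -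
    obtain i where "i \<in> J" "s J = axis i 1"
      using s J by (meson imageE)
    then show ?thesis
      using inner_axis_le_arg_max_on[OF assms(1) finite \<open>i \<in> J\<close> mono] by simp
  qed
  ultimately show ?thesis
    unfolding y nest_vertex_def inner_sum_right
    using I(1) by (intro sum_strict_mono_ex1 finite) blast+
qed

lemma inner_nestohedron_le_nest_vertex:
  fixes a :: "real^'n::finite" and w :: "'n \<Rightarrow> 'b::linorder"
  assumes "inj w" "{} \<notin> B" "\<forall>i j. w i \<le> w j \<longrightarrow> a $ i \<le> a $ j" "y \<in> nestohedron B"
  shows "a \<bullet> y \<le> a \<bullet> nest_vertex B w"
proof -
  have "convex hull (\<Sum>I\<in>B. (\<lambda>i. axis i 1) ` I) \<subseteq> {y. a \<bullet> y \<le> a \<bullet> nest_vertex B w}"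
    using inner_set_sum_le_nest_vertex[OF assms(1-3)]
    by (intro hull_minimal) (auto simp: convex_halfspace_le)
  then show ?thesis
    using assms(4) unfolding nestohedron_eq_convex_hull by blast
qed

lemma nest_vertex_extreme_point:
  fixes w :: "'n::finite \<Rightarrow> nat"
  assumes "inj w" "{} \<notin> B"
  shows "nest_vertex B w extreme_point_of nestohedron B"
proof -
  define V where "V = (\<Sum>I\<in>B. (\<lambda>i. axis i (1::real)) ` I)"
  define v where "v = nest_vertex B w"
  define a :: "real^'n" where "a = (\<chi> i. real (w i))"
  have "convex hull (V - {v}) \<subseteq> {y. a \<bullet> y < a \<bullet> v}"
    using inner_set_sum_less_nest_vertex[OF assms, of a] unfolding V_def v_def a_def
    by (intro hull_minimal) (auto simp: convex_halfspace_lt)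
  then have "v \<notin> convex hull (V - {v})"
    by auto
  moreover have "finite V"
    unfolding V_def by (intro finite_set_sum) auto
  ultimately have "v extreme_point_of convex hull (insert v (V - {v}))"
    by (intro extreme_point_of_convex_hull_insert) auto
  moreover have "insert v (V - {v}) = V"
    using nest_vertex_in_set_sum[OF assms] unfolding V_def v_def by blast
  ultimately show ?thesis
    unfolding nestohedron_eq_convex_hull V_def v_def by (simp only:)
qed

lemma extreme_point_imp_nest_vertex:
  fixes B :: "'n::finite set set"
  assumes "{} \<notin> B" "x extreme_point_of nestohedron B"
  shows "\<exists>w :: 'n \<Rightarrow> nat. inj w \<and> x = nest_vertex B w"
proof -
  have "polyhedron (nestohedron B)"
    by (rule polytope_imp_polyhedron[OF polytope_nestohedron])
  then have "{x} exposed_face_of nestohedron B"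
    using assms(2) by (simp add: exposed_face_of_polyhedron face_of_singleton)
  then obtain a b where le: "nestohedron B \<subseteq> {y. a \<bullet> y \<le> b}"
    and face: "{x} = nestohedron B \<inter> {y. a \<bullet> y = b}"
    unfolding exposed_face_of_def by blast
  obtain w :: "'n \<Rightarrow> nat" where w: "inj w" "\<forall>i j. w i \<le> w j \<longrightarrow> a $ i \<le> a $ j"
    using exists_inj_nat_mono[of "\<lambda>i. a $ i"] by blast
  have v: "nest_vertex B w \<in> nestohedron B"
    using nest_vertex_extreme_point[OF w(1) assms(1)] by (simp add: extreme_point_of_def)
  have x: "x \<in> nestohedron B" "a \<bullet> x = b"
    using face by blast+
  have "a \<bullet> x \<le> a \<bullet> nest_vertex B w"
    by (rule inner_nestohedron_le_nest_vertex[OF w(1) assms(1) w(2) x(1)])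
  moreover have "a \<bullet> nest_vertex B w \<le> b"
    using le v by blast
  ultimately have "nest_vertex B w \<in> nestohedron B \<inter> {y. a \<bullet> y = b}"
    using v x(2) by simp
  then have "nest_vertex B w = x"
    unfolding face[symmetric] by simp
  then show ?thesis
    using w(1) by blast
qed

section \<open>Moving a vertex by a consecutive swap\<close>

definition imbalance :: "'n set set \<Rightarrow> 'n \<Rightarrow> 'n \<Rightarrow> real" where
  "imbalance B a b = real (card {I\<in>B. a \<in> I \<and> b \<notin> I}) - real (card {I\<in>B. b \<in> I \<and> a \<notin> I})"

lemma nest_vertex_component:
  "nest_vertex B w $ x = real (card {I\<in>B. arg_max_on w I = x})"
proof -
  have "nest_vertex B w $ x = (\<Sum>I\<in>B. if arg_max_on w I = x then 1 else 0)"
    unfolding nest_vertex_def by (auto simp: axis_def intro!: sum.cong)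
  then show ?thesis
    by (simp add: sum.If_cases Int_def)
qed

lemma nest_vertex_swap_consecutive:
  fixes B :: "'n::finite set set" and w :: "'n \<Rightarrow> 'a::linorder"
  assumes "inj w" "consecutive w a b" "{} \<notin> B"
  shows "nest_vertex B (w(a := w b, b := w a)) = nest_vertex B w
    + real (card {I \<in> restrict_bset B {x. w x \<le> w b}. a \<in> I \<and> b \<in> I}) *\<^sub>R (axis a 1 - axis b 1)"
proof -
  define S where "S = {I \<in> restrict_bset B {x. w x \<le> w b}. a \<in> I \<and> b \<in> I}"
  have "axis (arg_max_on (w(a := w b, b := w a)) I) 1
      = axis (arg_max_on w I) 1 + (if I \<in> S then axis a 1 - axis b 1 else 0 :: real^'n)"
    if "I \<in> B" for I
  proof -
    have I: "finite I" "I \<noteq> {}"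
      using assms(3) that by auto
    show ?thesis
      unfolding arg_max_on_swap_consecutive[OF assms(1,2) I] S_def restrict_bset_def
      using arg_max_on_consecutive_iff(1)[OF assms(1,2) I] that by auto
  qed
  then have "nest_vertex B (w(a := w b, b := w a))
      = nest_vertex B w + (\<Sum>I\<in>B. if I \<in> S then axis a 1 - axis b 1 else 0)"
    unfolding nest_vertex_def sum.distrib[symmetric] by (rule sum.cong[OF refl])
  also have "(\<Sum>I\<in>B. if I \<in> S then axis a 1 - axis b 1 else 0) = (\<Sum>I\<in>S. axis a 1 - axis b 1 :: real^'n)"
  proof -
    have "S \<subseteq> B"
      unfolding S_def restrict_bset_def by auto
    then show ?thesis
      by (simp add: sum.If_cases Int_absorb1)
  qed
  also have "\<dots> = real (card S) *\<^sub>R (axis a 1 - axis b 1)"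
    by (rule real_vector.sum_constant_scale)
  finally show ?thesis
    unfolding S_def .
qed

lemma nest_vertex_consecutive_diff:
  fixes B :: "'n::finite set set" and w :: "'n \<Rightarrow> 'a::linorder"
  assumes "inj w" "consecutive w a b" "{} \<notin> B"
  shows "nest_vertex B w $ a - nest_vertex B w $ b
      + real (card {I \<in> restrict_bset B {x. w x \<le> w b}. a \<in> I \<and> b \<in> I})
    = imbalance (restrict_bset B {x. w x \<le> w b}) a b"
proof -
  define P where "P = {x. w x \<le> w b}"
  have I: "finite I" "I \<noteq> {}" if "I \<in> B" for I
    using assms(3) that by auto
  have top_a: "{I\<in>B. arg_max_on w I = a} = {I \<in> restrict_bset B P. a \<in> I \<and> b \<notin> I}"
    using arg_max_on_consecutive_iff(2)[OF assms(1,2) I] unfolding restrict_bset_def P_def by auto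
  have top_b: "{I\<in>B. arg_max_on w I = b}
      = {I \<in> restrict_bset B P. b \<in> I \<and> a \<notin> I} \<union> {I \<in> restrict_bset B P. a \<in> I \<and> b \<in> I}"
    using arg_max_on_consecutive_iff(1)[OF assms(1,2) I] unfolding restrict_bset_def P_def by auto
  have "card {I\<in>B. arg_max_on w I = b}
      = card {I \<in> restrict_bset B P. b \<in> I \<and> a \<notin> I} + card {I \<in> restrict_bset B P. a \<in> I \<and> b \<in> I}"
    unfolding top_b by (rule card_Un_disjoint) auto
  then show ?thesis
    unfolding nest_vertex_component imbalance_def top_a P_def[symmetric] by simp
qed

lemma norm_add_scaleR_axis_diff_sq:
  fixes u :: "real^'n"
  assumes "a \<noteq> b"
  shows "(norm (u + t *\<^sub>R (axis a 1 - axis b 1)))\<^sup>2 = (norm u)\<^sup>2 + 2 * t * (u $ a - u $ b) + 2 * t\<^sup>2"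
proof -
  define d :: "real^'n" where "d = axis a 1 - axis b 1"
  have ud: "u \<bullet> d = u $ a - u $ b"
    unfolding d_def by (simp add: inner_diff_right inner_axis)
  have dd: "d \<bullet> d = 2"
    using assms unfolding d_def by (simp add: inner_diff_left inner_diff_right inner_axis_axis)
  have "(norm (u + t *\<^sub>R d))\<^sup>2 = u \<bullet> u + 2 * t * (u \<bullet> d) + t\<^sup>2 * (d \<bullet> d)"
    unfolding power2_norm_eq_inner
    by (simp add: inner_add_left inner_add_right inner_commute[of d u] algebra_simps power2_eq_square)
  then show ?thesis
    unfolding d_def[symmetric] ud dd by (simp add: power2_norm_eq_inner)
qed

lemma dist_sq_nest_vertex_swap_consecutive:
  fixes B :: "'n::finite set set" and w :: "'n \<Rightarrow> 'a::linorder" and c :: "real^'n"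
  assumes "inj w" "consecutive w a b" "{} \<notin> B"
  defines "N \<equiv> real (card {I \<in> restrict_bset B {x. w x \<le> w b}. a \<in> I \<and> b \<in> I})"
  shows "(dist c (nest_vertex B (w(a := w b, b := w a))))\<^sup>2 - (dist c (nest_vertex B w))\<^sup>2
    = 2 * N * (imbalance (restrict_bset B {x. w x \<le> w b}) a b - c $ a + c $ b)"
proof -
  have "a \<noteq> b"
    using assms(2) unfolding consecutive_def by auto
  define u where "u = nest_vertex B w - c"
  have dist_c: "dist c x = norm (x - c)" for x
    by (simp add: dist_norm norm_minus_commute)
  have "dist c (nest_vertex B (w(a := w b, b := w a))) = norm (u + N *\<^sub>R (axis a 1 - axis b 1))"
    unfolding dist_c nest_vertex_swap_consecutive[OF assms(1-3)] N_def u_def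
    by (simp add: algebra_simps)
  moreover have "dist c (nest_vertex B w) = norm u"
    unfolding u_def dist_c ..
  ultimately have "(dist c (nest_vertex B (w(a := w b, b := w a))))\<^sup>2 - (dist c (nest_vertex B w))\<^sup>2
      = 2 * N * (nest_vertex B w $ a - nest_vertex B w $ b + N - c $ a + c $ b)"
    using norm_add_scaleR_axis_diff_sq[OF \<open>a \<noteq> b\<close>, of u N]
    unfolding u_def by (simp add: algebra_simps power2_eq_square)
  then show ?thesis
    using nest_vertex_consecutive_diff[OF assms(1-3)] unfolding N_def by simp
qed

section \<open>The counting condition\<close>

definition degree_vector :: "'n::finite set set \<Rightarrow> real^'n" where
  "degree_vector B = (\<chi> x. real (card {I\<in>B. x \<in> I}))"

lemma imbalance_eq_degree_diff:
  fixes B :: "'n::finite set set"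
  shows "imbalance B a b = degree_vector B $ a - degree_vector B $ b"
proof -
  have "card {I\<in>B. x \<in> I} = card {I\<in>B. x \<in> I \<and> y \<notin> I} + card {I\<in>B. x \<in> I \<and> y \<in> I}" for x y
  proof -
    have "{I\<in>B. x \<in> I} = {I\<in>B. x \<in> I \<and> y \<notin> I} \<union> {I\<in>B. x \<in> I \<and> y \<in> I}"
      by auto
    then show ?thesis
      by (simp add: card_Un_disjoint disjoint_iff)
  qed
  from this[of a b] this[of b a] show ?thesis
    unfolding imbalance_def degree_vector_def by (simp add: conj_commute)
qed

lemma card_restrict_bset_insert:
  fixes B :: "'n::finite set set"
  assumes "k \<notin> Q"
  shows "card {I \<in> restrict_bset B (insert k Q). a \<in> I \<and> b \<notin> I}
    = card {I \<in> restrict_bset B Q. a \<in> I \<and> b \<notin> I} + ncount (restrict_bset B (insert k Q)) b a k"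
proof -
  have "{I \<in> restrict_bset B (insert k Q). a \<in> I \<and> b \<notin> I}
      = {I \<in> restrict_bset B Q. a \<in> I \<and> b \<notin> I} \<union> {I \<in> restrict_bset B (insert k Q). a \<in> I \<and> k \<in> I \<and> b \<notin> I}"
    unfolding restrict_bset_def using assms by auto
  moreover have "{I \<in> restrict_bset B Q. a \<in> I \<and> b \<notin> I} \<inter> {I \<in> restrict_bset B (insert k Q). a \<in> I \<and> k \<in> I \<and> b \<notin> I} = {}"
    unfolding restrict_bset_def using assms by auto
  ultimately show ?thesis
    unfolding ncount_def by (simp add: card_Un_disjoint)
qed

lemma imbalance_restrict_bset_insert:
  fixes B :: "'n::finite set set"
  assumes "k \<notin> Q"
  shows "imbalance (restrict_bset B (insert k Q)) a b = imbalance (restrict_bset B Q) a b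
    + real (ncount (restrict_bset B (insert k Q)) b a k) - real (ncount (restrict_bset B (insert k Q)) a b k)"
  unfolding imbalance_def card_restrict_bset_insert[OF assms] by simp

lemma ncount_commute: "ncount B k i j = ncount B k j i"
  unfolding ncount_def by (rule arg_cong[where f = card]) auto

definition balanced :: "'n set set \<Rightarrow> bool" where
  "balanced B \<longleftrightarrow> (\<forall>J. \<forall>a\<in>J. \<forall>b\<in>J. \<forall>k\<in>J. ncount (restrict_bset B J) k a b > 0 \<longrightarrow>
     ncount (restrict_bset B J) b a k = ncount (restrict_bset B J) a b k)"

lemma balanced_iff:
  "balanced B \<longleftrightarrow>
    (\<forall>J. \<forall>i\<in>J. \<forall>j\<in>J. \<forall>k\<in>J.
       ncount (restrict_bset B J) k i j > 0 \<and> ncount (restrict_bset B J) i j k > 0 \<longrightarrow>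
       ncount (restrict_bset B J) k i j = ncount (restrict_bset B J) i j k \<and>
       ncount (restrict_bset B J) i j k = ncount (restrict_bset B J) j i k)"
  (is "_ \<longleftrightarrow> (\<forall>J. \<forall>i\<in>J. \<forall>j\<in>J. \<forall>k\<in>J. ?pos J i j k \<longrightarrow> ?eq J i j k)")
proof
  assume bal: "balanced B"
  show "\<forall>J. \<forall>i\<in>J. \<forall>j\<in>J. \<forall>k\<in>J. ?pos J i j k \<longrightarrow> ?eq J i j k"
  proof (intro allI ballI impI)
    fix J i j k
    let ?n = "ncount (restrict_bset B J)"
    assume mem: "i \<in> J" "j \<in> J" "k \<in> J" and pos: "?pos J i j k"
    have "?n j i k = ?n i j k"
      using bal mem pos unfolding balanced_def by blast
    moreover have "?n k j i = ?n j k i"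
      using bal mem pos unfolding balanced_def by blast
    ultimately show "?eq J i j k"
      using ncount_commute by metis
  qed
next
  assume cond: "\<forall>J. \<forall>i\<in>J. \<forall>j\<in>J. \<forall>k\<in>J. ?pos J i j k \<longrightarrow> ?eq J i j k"
  show "balanced B"
    unfolding balanced_def
  proof (intro allI ballI impI)
    fix J a b k
    let ?n = "ncount (restrict_bset B J)"
    assume mem: "a \<in> J" "b \<in> J" "k \<in> J" and pos: "?n k a b > 0"
    show "?n b a k = ?n a b k"
    proof (cases "?n b a k > 0")
      case True
      then show ?thesis
        using cond mem pos ncount_commute[of _ k a b] by metis
    next
      case False
      then show ?thesis
        using cond mem pos by (metis neq0_conv)
    qed
  qed
qed

lemma balanced_imp_imbalance_restrict_bset:
  fixes B :: "'n::finite set set"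
  assumes "balanced B" "I \<in> B" "I \<subseteq> P" "a \<in> I" "b \<in> I"
  shows "imbalance (restrict_bset B P) a b = degree_vector B $ a - degree_vector B $ b"
proof -
  have "imbalance (restrict_bset B (P \<union> F)) a b = imbalance (restrict_bset B P) a b" if "finite F" for F
    using that
  proof (induction F rule: finite_induct)
    case (insert k F)
    show ?case
    proof (cases "k \<in> P \<union> F")
      case True
      then show ?thesis
        using insert.IH by (simp add: insert_absorb)
    next
      case False
      let ?BJ = "restrict_bset B (insert k (P \<union> F))"
      have "I \<in> {I' \<in> ?BJ. a \<in> I' \<and> b \<in> I' \<and> k \<notin> I'}"
        using assms(2-5) False unfolding restrict_bset_def by auto
      then have "ncount ?BJ k a b > 0"
        unfolding ncount_def by (auto simp: card_gt_0_iff)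
      then have "ncount ?BJ b a k = ncount ?BJ a b k"
        using assms(1) assms(3-5) unfolding balanced_def by blast
      then show ?thesis
        using imbalance_restrict_bset_insert[OF False, of B a b] insert.IH by simp
    qed
  qed simp
  from this[of UNIV] show ?thesis
    by (simp add: restrict_bset_def imbalance_eq_degree_diff)
qed

lemma balanced_if_imbalance_restrict_bset:
  fixes B :: "'n::finite set set" and c :: "real^'n"
  assumes "\<And>I P a b. I \<in> B \<Longrightarrow> I \<subseteq> P \<Longrightarrow> a \<in> I \<Longrightarrow> b \<in> I \<Longrightarrow> a \<noteq> b \<Longrightarrow>
      imbalance (restrict_bset B P) a b = c $ a - c $ b"
  shows "balanced B"
  unfolding balanced_def
proof (intro allI ballI impI)
  fix J a b k
  assume "a \<in> J" "b \<in> J" "k \<in> J" and pos: "ncount (restrict_bset B J) k a b > 0"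
  have "{I \<in> restrict_bset B J. a \<in> I \<and> b \<in> I \<and> k \<notin> I} \<noteq> {}"
    using pos unfolding ncount_def by (metis card.empty less_irrefl)
  then obtain I where I: "I \<in> B" "I \<subseteq> J - {k}" "a \<in> I" "b \<in> I"
    unfolding restrict_bset_def by blast
  show "ncount (restrict_bset B J) b a k = ncount (restrict_bset B J) a b k"
  proof (cases "a = b")
    case False
    have "imbalance (restrict_bset B J) a b = imbalance (restrict_bset B (J - {k})) a b
        + real (ncount (restrict_bset B J) b a k) - real (ncount (restrict_bset B J) a b k)"
      using imbalance_restrict_bset_insert[of k "J - {k}" B a b] insert_Diff[OF \<open>k \<in> J\<close>] by simp
    moreover have "imbalance (restrict_bset B J) a b = c $ a - c $ b"
      "imbalance (restrict_bset B (J - {k})) a b = c $ a - c $ b"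
      using assms[OF I(1) _ I(3,4) False] I(2) by blast+
    ultimately show ?thesis
      by simp
  qed simp
qed

section \<open>Inscribed nestohedra\<close>

lemma nest_vertex_cong:
  fixes w :: "'n::finite \<Rightarrow> 'a::linorder" and w' :: "'n \<Rightarrow> 'b::linorder"
  assumes "inj w" "inj w'" "\<forall>x y. w x < w y \<longrightarrow> w' x < w' y" "{} \<notin> B"
  shows "nest_vertex B w = nest_vertex B w'"
proof -
  have "arg_max_on w' I = arg_max_on w I" if "I \<in> B" for I
  proof -
    have I: "finite I" "I \<noteq> {}"
      using assms(4) that by auto
    let ?t = "arg_max_on w I"
    have t: "?t \<in> I" "\<And>y. y \<in> I \<Longrightarrow> w y \<le> w ?t"
      using arg_max_on_inj[OF assms(1) I] by auto
    have "w' y \<le> w' ?t" if "y \<in> I" for y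
    proof (cases "y = ?t")
      case False
      then have "w y < w ?t"
        using t(2)[OF that] inj_eq[OF assms(1)] by (simp add: order.strict_iff_order)
      then show ?thesis
        using assms(3) less_imp_le by blast
    qed simp
    then show ?thesis
      using t(1) arg_max_on_inj_eq_iff[OF assms(2) I, of ?t] by blast
  qed
  then show ?thesis
    unfolding nest_vertex_def by (intro sum.cong) auto
qed

lemma balanced_imp_dist_degree_vector_swap:
  fixes B :: "'n::finite set set" and w :: "'n \<Rightarrow> 'a::linorder"
  assumes "balanced B" "{} \<notin> B" "inj w" "consecutive w a b"
  shows "dist (degree_vector B) (nest_vertex B (w(a := w b, b := w a)))
    = dist (degree_vector B) (nest_vertex B w)"
proof -
  let ?P = "{x. w x \<le> w b}"
  let ?S = "{I \<in> restrict_bset B ?P. a \<in> I \<and> b \<in> I}"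
  have "2 * real (card ?S) * (imbalance (restrict_bset B ?P) a b - degree_vector B $ a + degree_vector B $ b) = 0"
  proof (cases "?S = {}")
    case False
    then obtain I where "I \<in> B" "I \<subseteq> ?P" "a \<in> I" "b \<in> I"
      unfolding restrict_bset_def by blast
    then show ?thesis
      using balanced_imp_imbalance_restrict_bset[OF assms(1)] by simp
  qed simp
  then have "(dist (degree_vector B) (nest_vertex B (w(a := w b, b := w a))))\<^sup>2
      = (dist (degree_vector B) (nest_vertex B w))\<^sup>2"
    using dist_sq_nest_vertex_swap_consecutive[OF assms(3,4,2), of "degree_vector B"] by linarith
  then show ?thesis
    by (simp add: power2_eq_iff_nonneg)
qed

lemma balanced_imp_inscribed:
  fixes B :: "'n::finite set set"
  assumes "balanced B" "{} \<notin> B"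
  shows "inscribed (nestohedron B)"
proof -
  let ?c = "degree_vector B"
  obtain w0 :: "'n \<Rightarrow> nat" where w0: "inj w0"
    using finite_imp_inj_to_nat_seg[of "UNIV :: 'n set"] by auto
  have "dist ?c (nest_vertex B w) = dist ?c (nest_vertex B w0)" if "inj w" for w :: "'n \<Rightarrow> nat"
    using w0 that
  proof (rule const_if_consecutive_swap_invariant)
    show "dist ?c (nest_vertex B (w(a := w b, b := w a))) = dist ?c (nest_vertex B w)"
      if "inj w" "consecutive w a b" for w :: "'n \<Rightarrow> nat" and a b
      by (rule balanced_imp_dist_degree_vector_swap[OF assms that])
    show "dist ?c (nest_vertex B w) = dist ?c (nest_vertex B w0)"
      if "inj w" "\<forall>x y. w x < w y \<longrightarrow> w0 x < w0 y" for w :: "'n \<Rightarrow> nat"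
      using nest_vertex_cong[OF that(1) w0 that(2) assms(2)] by simp
  qed
  then have "x \<in> sphere ?c (dist ?c (nest_vertex B w0))" if "x extreme_point_of nestohedron B" for x
    using extreme_point_imp_nest_vertex[OF assms(2) that] by auto
  then show ?thesis
    unfolding inscribed_def by blast
qed

lemma inscribed_imp_imbalance_restrict_bset:
  fixes B :: "'n::finite set set" and c :: "real^'n"
  assumes "{v. v extreme_point_of nestohedron B} \<subseteq> sphere c r" "{} \<notin> B"
    and "I \<in> B" "I \<subseteq> P" "a \<in> I" "b \<in> I" "a \<noteq> b"
  shows "imbalance (restrict_bset B P) a b = c $ a - c $ b"
proof -
  obtain w :: "'n \<Rightarrow> nat" where w: "inj w" "consecutive w a b" "{x. w x \<le> w b} = P"
    using exists_consecutive_with_downset[OF assms(7)] assms(4-6) by blast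
  have on_sphere: "dist c x = r" if "x extreme_point_of nestohedron B" for x
    using assms(1) that by auto
  have "dist c (nest_vertex B (w(a := w b, b := w a))) = r" "dist c (nest_vertex B w) = r"
    using on_sphere nest_vertex_extreme_point[OF inj_swap_values[OF w(1)] assms(2)]
      nest_vertex_extreme_point[OF w(1) assms(2)] by blast+
  then have "real (card {I \<in> restrict_bset B P. a \<in> I \<and> b \<in> I})
      * (imbalance (restrict_bset B P) a b - c $ a + c $ b) = 0"
    using dist_sq_nest_vertex_swap_consecutive[OF w(1,2) assms(2), of c] unfolding w(3) by simp
  moreover have "card {I \<in> restrict_bset B P. a \<in> I \<and> b \<in> I} > 0"
    using assms(3-6) unfolding restrict_bset_def by (auto simp: card_gt_0_iff)
  ultimately have "imbalance (restrict_bset B P) a b - c $ a + c $ b = 0"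
    by (metis mult_eq_0_iff of_nat_0_less_iff less_irrefl)
  then show ?thesis
    by linarith
qed

lemma inscribed_imp_balanced:
  fixes B :: "'n::finite set set"
  assumes "inscribed (nestohedron B)" "{} \<notin> B"
  shows "balanced B"
proof -
  obtain c :: "real^'n" and r where "{v. v extreme_point_of nestohedron B} \<subseteq> sphere c r"
    using assms(1) unfolding inscribed_def by blast
  from inscribed_imp_imbalance_restrict_bset[OF this assms(2)] show ?thesis
    by (rule balanced_if_imbalance_restrict_bset)
qed

theorem theorem4p19:
  fixes B :: "('n::finite) set set"
  assumes "building_set B"
  shows "inscribed (nestohedron B) \<longleftrightarrow>
    (\<forall>J. \<forall>i\<in>J. \<forall>j\<in>J. \<forall>k\<in>J.
       ncount (restrict_bset B J) k i j > 0 \<and> ncount (restrict_bset B J) i j k > 0 \<longrightarrow>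
       ncount (restrict_bset B J) k i j = ncount (restrict_bset B J) i j k \<and>
       ncount (restrict_bset B J) i j k = ncount (restrict_bset B J) j i k)"
proof -
  have "{} \<notin> B"
    using assms unfolding building_set_def by blast
  then have "inscribed (nestohedron B) \<longleftrightarrow> balanced B"
    using balanced_imp_inscribed inscribed_imp_balanced by metis
  then show ?thesis
    unfolding balanced_iff .
qed

end
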